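(* Let $(l_n)_{n\ge 1}$, $(r_n)_{n\ge 1}$ be real numbers with $l_n,r_n>0$ and $l_n+r_n=1$ for all $n\ge 1$, and let $k\ge 1$ be an integer. Let $(X_m)_{m\ge 0}$ be the birth-death chain on $\{0,1,2,\dots\}$ with these probabilities started at $X_0=k$, and let $T_\Delta$ be its first hitting time of $0$ ($T_\Delta=\infty$ if $0$ is never hit). For $n\ge 1$ set $t_n=\frac{l_1\cdots l_n}{r_1\cdots r_n}$. Suppose that $t_\infty:=\lim_{n\to\infty} t_n$ exists in $[0,\infty]$. Then for every non-decreasing sequence of stopping times $(T_m)_{m\ge 1}$ with $E[T_m]<\infty$ for all $m$ and $T_m\to T_\Delta$ almost surely, the limit $\lim_{m\to\infty}E[X_{T_m}]$ exists and $$\lim_{m\to\infty}E[X_{T_m}]=\frac{1+\frac{l_1}{r_1}+\frac{l_1l_2}{r_1r_2}+\cdots+\frac{l_1\cdots l_{k-1}}{r_1\cdots r_{k-1}}}{t_\infty},$$ where the right-hand side is interpreted as $0$ if $t_\infty=+\infty$ and as $+\infty$ if $t_\infty=0$.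
   Context: The birth-death chain: $(X_m)$ is a time-homogeneous Markov chain on the nonnegative integers such that from a state $n\ge 1$ it moves to $n+1$ with probability $r_n$ and to $n-1$ with probability $l_n$ (and to no other state), while $0$ is absorbing ($p_{00}=1$). Stopping times are with respect to the natural filtration of $(X_m)$. *)

theory Defs
  imports "HOL-Probability.Probability"
begin

definition bd_trans :: "(nat \<Rightarrow> real) \<Rightarrow> (nat \<Rightarrow> real) \<Rightarrow> nat \<Rightarrow> nat \<Rightarrow> real" where
  "bd_trans l r n j =
     (if n = 0 then (if j = 0 then 1 else 0)
      else if j = Suc n then r n
      else if Suc j = n then l n
      else 0)"

definition bd_chain ::
  "'a measure \<Rightarrow> (nat \<Rightarrow> real) \<Rightarrow> (nat \<Rightarrow> real) \<Rightarrow> nat \<Rightarrow> (nat \<Rightarrow> 'a \<Rightarrow> nat) \<Rightarrow> bool" where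
  "bd_chain M l r k X \<longleftrightarrow>
     prob_space M \<and>
     (\<forall>m. X m \<in> measurable M (count_space UNIV)) \<and>
     (AE x in M. X 0 x = k) \<and>
     (\<forall>m (s :: nat \<Rightarrow> nat) j.
        measure M {x \<in> space M. (\<forall>i\<le>m. X i x = s i) \<and> X (Suc m) x = j}
        = bd_trans l r (s m) j * measure M {x \<in> space M. \<forall>i\<le>m. X i x = s i})"

text \<open>Stopping time (possibly infinite) with respect to the natural filtration of X:
  each event {T = n} lies in the sigma-algebra generated by X 0, ..., X n
  (for discrete-valued X these are exactly the preimages of sets of paths).\<close>
definition nat_stopping_time ::
  "'a measure \<Rightarrow> (nat \<Rightarrow> 'a \<Rightarrow> nat) \<Rightarrow> ('a \<Rightarrow> enat) \<Rightarrow> bool" where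
  "nat_stopping_time M X T \<longleftrightarrow>
     (\<forall>n::nat. \<exists>B :: nat list set.
        {x \<in> space M. T x = enat n} = {x \<in> space M. map (\<lambda>i. X i x) [0..<Suc n] \<in> B})"

definition hit_zero :: "(nat \<Rightarrow> 'a \<Rightarrow> nat) \<Rightarrow> 'a \<Rightarrow> enat" where
  "hit_zero X x = (if \<exists>n. X n x = 0 then enat (LEAST n. X n x = 0) else \<infinity>)"

text \<open>The stopped value X_T (set to 0 on the event T = infinity, which is null
  whenever T has finite expectation).\<close>
definition stopped_val :: "(nat \<Rightarrow> 'a \<Rightarrow> nat) \<Rightarrow> ('a \<Rightarrow> enat) \<Rightarrow> 'a \<Rightarrow> nat" where
  "stopped_val X T x = (case T x of enat n \<Rightarrow> X n x | \<infinity> \<Rightarrow> 0)"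

definition t_seq :: "(nat \<Rightarrow> real) \<Rightarrow> (nat \<Rightarrow> real) \<Rightarrow> nat \<Rightarrow> real" where
  "t_seq l r n = (\<Prod>i=1..n. l i) / (\<Prod>i=1..n. r i)"

end

theory Submission
  imports Defs
begin

text \<open>
  With q j = (l 1 \<cdots> l j) / (r 1 \<cdots> r j), the scale function \<phi> n = q 0 + \<dots> + q (n - 1)
  is harmonic for the chain and vanishes at the absorbing state 0, so \<phi>(X) is a nonnegative
  martingale and \<phi> k is the numerator of the claimed limit. Optional stopping gives
  E \<phi>(X_T) = \<phi> k for every stopping time T of finite mean (by dominated convergence when q
  is bounded, which it is when t_\<infinity> < \<infinity>; Fatou gives \<le> in general).

  Since q n \<rightarrow> t_\<infinity>, \<phi> n is about t_\<infinity> n for large n. On the event where 0 is hit,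
  X_{T_m} is eventually 0, so the contribution of bounded values to E \<phi>(X_{T_m}) vanishes and
  t_\<infinity> E X_{T_m} \<approx> E \<phi>(X_{T_m}) \<approx> \<phi> k. If t_\<infinity> > 0, then \<phi> is unbounded and by Fatou 0 is
  hit almost surely. If t_\<infinity> = 0 and 0 is missed with positive probability, then the chain
  escapes to infinity on that event (a submartingale built from \<phi>^2 shows, via Borel-Cantelli,
  that each finite set of positive states is visited finitely often), and E X_{T_m} \<rightarrow> \<infinity>
  by Fatou.
\<close>

lemma nn_integral_split_countable:
  fixes Z :: "'a \<Rightarrow> 'b::countable"
  assumes [measurable]: "Z \<in> M \<rightarrow>\<^sub>M count_space UNIV" "h \<in> borel_measurable M"
  shows "(\<integral>\<^sup>+x. h x \<partial>M) = (\<integral>\<^sup>+b. (\<integral>\<^sup>+x. h x * indicator {x\<in>space M. Z x = b} x \<partial>M) \<partial>count_space UNIV)"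
proof -
  have "(\<integral>\<^sup>+b. (\<integral>\<^sup>+x. h x * indicator {x\<in>space M. Z x = b} x \<partial>M) \<partial>count_space UNIV)
      = (\<integral>\<^sup>+x. (\<integral>\<^sup>+b. h x * indicator {x\<in>space M. Z x = b} x \<partial>count_space UNIV) \<partial>M)"
    by (rule nn_integral_count_space_nn_integral[symmetric]) auto
  also have "\<dots> = (\<integral>\<^sup>+x. (\<integral>\<^sup>+b. h x * indicator {Z x} b \<partial>count_space UNIV) \<partial>M)"
    by (intro nn_integral_cong) (auto split: split_indicator)
  finally show ?thesis
    by simp
qed

lemma ennreal_add_less_add_le: "x < y \<Longrightarrow> z \<le> w \<Longrightarrow> w \<noteq> \<top> \<Longrightarrow> x + z < y + (w::ennreal)"
proof -
  assume "x < y" "z \<le> w" "w \<noteq> \<top>"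
  then have "x + z \<le> x + w" "x + w < y + w"
    using ennreal_add_left_cancel_less[of w x y] by (simp_all add: add_left_mono add.commute)
  then show ?thesis
    by (rule order_le_less_trans)
qed

lemma nn_integral_tendsto_top_liminf:
  assumes [measurable]: "\<And>n. u n \<in> borel_measurable M" "E \<in> sets M"
    and top: "AE x in M. x \<in> E \<longrightarrow> (\<lambda>n. u n x) \<longlonglongrightarrow> \<top>"
  shows "\<top> * emeasure M E \<le> liminf (\<lambda>n. \<integral>\<^sup>+x. u n x \<partial>M)"
proof -
  have "\<top> * emeasure M E = (\<integral>\<^sup>+x. \<top> * indicator E x \<partial>M)"
    by (simp add: nn_integral_cmult_indicator)
  moreover have "AE x in M. \<top> * indicator E x \<le> liminf (\<lambda>n. u n x)"
    using top by eventually_elim (auto simp: lim_imp_Liminf split: split_indicator)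
  ultimately have "\<top> * emeasure M E \<le> (\<integral>\<^sup>+x. liminf (\<lambda>n. u n x) \<partial>M)"
    by (simp add: nn_integral_mono_AE)
  also have "\<dots> \<le> liminf (\<lambda>n. \<integral>\<^sup>+x. u n x \<partial>M)"
    by (rule nn_integral_liminf) simp
  finally show ?thesis .
qed

lemma ennreal_tendstoI:
  fixes f :: "'b \<Rightarrow> ennreal"
  assumes lower: "\<And>b. 0 \<le> b \<Longrightarrow> ennreal b < L \<Longrightarrow> eventually (\<lambda>m. ennreal b < f m) F"
    and upper: "\<And>u. 0 < u \<Longrightarrow> L < ennreal u \<Longrightarrow> eventually (\<lambda>m. f m < ennreal u) F"
  shows "(f \<longlongrightarrow> L) F"
  unfolding order_tendsto_iff
proof safe
  fix y assume "y < L"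
  then have "y < \<top>"
    using top.not_eq_extremum by fastforce
  then obtain b where "0 \<le> b" "y = ennreal b"
    using less_top_ennreal by blast
  with \<open>y < L\<close> show "eventually (\<lambda>m. y < f m) F"
    using lower by blast
next
  fix y assume "L < y"
  then obtain z where "L < z" "z < y"
    using dense by blast
  then have "z < \<top>"
    using top.not_eq_extremum by fastforce
  then obtain u where "0 \<le> u" "z = ennreal u"
    using less_top_ennreal by blast
  with \<open>L < z\<close> have "0 < u"
    by (cases "u = 0") auto
  with \<open>L < z\<close> \<open>z = ennreal u\<close> \<open>z < y\<close> show "eventually (\<lambda>m. f m < y) F"
    using upper[of u] by (auto elim: eventually_mono)
qed

lemma tendsto_enat_of_ennreal_of_enat:
  assumes "((\<lambda>m. ennreal_of_enat (f m)) \<longlongrightarrow> ennreal_of_enat x) F"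
  shows "(f \<longlongrightarrow> x) F"
proof -
  have less_iff: "ennreal_of_enat a < ennreal_of_enat b \<longleftrightarrow> a < b" for a b
    by (simp add: less_le)
  show ?thesis
    unfolding order_tendsto_iff
    using order_tendstoD[OF assms, of "ennreal_of_enat _"] by (simp add: less_iff)
qed

lemma tendsto_enat_eventually_eq: "(f \<longlongrightarrow> enat h) F \<Longrightarrow> eventually (\<lambda>m. f m = enat h) F"
  by (simp add: nhds_enat filterlim_principal)

lemma filterlim_the_enat_at_top:
  assumes "(f \<longlongrightarrow> \<infinity>) F" and "\<And>m. f m \<noteq> \<infinity>"
  shows "filterlim (\<lambda>m. the_enat (f m)) at_top F"
  unfolding filterlim_at_top
proof
  fix Z
  show "eventually (\<lambda>m. Z \<le> the_enat (f m)) F"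
    using order_tendstoD(1)[OF assms(1), of "enat Z"]
  proof (rule eventually_mono)
    fix m assume "enat Z < f m"
    moreover obtain i where "f m = enat i"
      using assms(2)[of m] by auto
    ultimately show "Z \<le> the_enat (f m)"
      by simp
  qed simp
qed

lemma exists_greater_mult_less:
  fixes b t F :: real
  assumes "0 \<le> b" "b * t < F"
  obtains a where "t < a" "b * a < F"
proof
  define d where "d = (F - b * t) / (2 * (b + 1))"
  show "t < t + d"
    using assms unfolding d_def by simp
  have "0 < F - b * t"
    using assms by simp
  then have "b * (F - b * t) < (2 * (b + 1)) * (F - b * t)"
    using assms(1) by (intro mult_strict_right_mono) auto
  then have "b * d < F - b * t"
    unfolding d_def using assms(1) by (simp add: pos_divide_less_eq mult_ac)
  then show "b * (t + d) < F"
    by (simp add: algebra_simps)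
qed

lemma exists_less_mult_greater:
  fixes t u F :: real
  assumes "0 < t" "0 < u" "0 \<le> F" "F < t * u"
  obtains c where "0 < c" "c < t" "F < c * u"
proof
  show "0 < (t + F / u) / 2" "(t + F / u) / 2 < t" "F < (t + F / u) / 2 * u"
    using assms by (simp_all add: field_simps)
qed

lemma (in prob_space) nn_integral_trunc_tendsto_0:
  fixes Z :: "nat \<Rightarrow> 'a \<Rightarrow> nat" and f :: "nat \<Rightarrow> real"
  assumes [measurable]: "\<And>m. Z m \<in> M \<rightarrow>\<^sub>M count_space UNIV"
    and Z_0: "AE x in M. eventually (\<lambda>m. Z m x = 0) sequentially"
    and "f 0 = 0"
  shows "(\<lambda>m. \<integral>\<^sup>+x. ennreal (f (min (Z m x) N)) \<partial>M) \<longlonglongrightarrow> 0"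
proof -
  define D where "D = Max (f ` {..N})"
  have "f (min n N) \<le> D" for n
    unfolding D_def by (intro Max_ge) auto
  then have "AE x in M. ennreal (f (min (Z m x) N)) \<le> ennreal D" for m
    by (intro AE_I2) (simp add: ennreal_leI)
  moreover have "AE x in M. (\<lambda>m. ennreal (f (min (Z m x) N))) \<longlonglongrightarrow> 0"
    using Z_0
  proof eventually_elim
    case (elim x)
    then have "eventually (\<lambda>m. ennreal (f (min (Z m x) N)) = 0) sequentially"
      by (rule eventually_mono) (simp add: \<open>f 0 = 0\<close>)
    then show ?case
      by (rule tendsto_eventually)
  qed
  ultimately have "(\<lambda>m. \<integral>\<^sup>+x. ennreal (f (min (Z m x) N)) \<partial>M) \<longlonglongrightarrow> (\<integral>\<^sup>+x. 0 \<partial>M)"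
    by (intro nn_integral_dominated_convergence[where w="\<lambda>_. ennreal D"]) (simp_all add: emeasure_space_1)
  then show ?thesis
    by simp
qed

text \<open>F = E f(Z m) \<le> E f(min (Z m) N) + a E(Z m), and the first term tends to 0.\<close>
lemma (in prob_space) eventually_less_nn_integral:
  fixes Z :: "nat \<Rightarrow> 'a \<Rightarrow> nat" and f :: "nat \<Rightarrow> real"
  assumes [measurable]: "\<And>m. Z m \<in> M \<rightarrow>\<^sub>M count_space UNIV"
    and Z_0: "AE x in M. eventually (\<lambda>m. Z m x = 0) sequentially"
    and f: "f 0 = 0" "\<And>n. f n \<ge> 0" "\<And>n. f n \<le> f (min n N) + a * n"
    and mean: "\<And>m. (\<integral>\<^sup>+x. ennreal (f (Z m x)) \<partial>M) = ennreal F"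
    and "a > 0" "b \<ge> 0" "b * a < F"
  shows "eventually (\<lambda>m. ennreal b < (\<integral>\<^sup>+x. ennreal (real (Z m x)) \<partial>M)) sequentially"
proof -
  let ?J = "\<lambda>m. \<integral>\<^sup>+x. ennreal (f (min (Z m x) N)) \<partial>M"
  let ?I = "\<lambda>m. \<integral>\<^sup>+x. ennreal (real (Z m x)) \<partial>M"
  have le: "ennreal F \<le> ?J m + ennreal a * ?I m" for m
  proof -
    have "ennreal F \<le> (\<integral>\<^sup>+x. ennreal (f (min (Z m x) N)) + ennreal a * ennreal (real (Z m x)) \<partial>M)"
      unfolding mean[of m, symmetric] using f \<open>a > 0\<close>
      by (intro nn_integral_mono) (simp add: ennreal_leI ennreal_plus[symmetric] ennreal_mult[symmetric] del: ennreal_plus)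
    then show ?thesis
      by (simp add: nn_integral_add nn_integral_cmult)
  qed
  have "eventually (\<lambda>m. ?J m < ennreal (F - b * a)) sequentially"
    using nn_integral_trunc_tendsto_0[of Z f, OF _ Z_0 f(1)] \<open>b * a < F\<close> by (intro order_tendstoD) auto
  then show ?thesis
  proof (rule eventually_mono)
    fix m assume J: "?J m < ennreal (F - b * a)"
    show "ennreal b < ?I m"
    proof (rule ccontr)
      assume "\<not> ennreal b < ?I m"
      then have "ennreal a * ?I m \<le> ennreal a * ennreal b"
        by (intro mult_left_mono) simp_all
      with J have "?J m + ennreal a * ?I m < ennreal (F - b * a) + ennreal a * ennreal b"
        by (intro ennreal_add_less_add_le) (auto simp: ennreal_mult_eq_top_iff)
      also have "\<dots> = ennreal F"
        using \<open>a > 0\<close> \<open>b \<ge> 0\<close> \<open>b * a < F\<close>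
        by (simp add: ennreal_mult[symmetric] ennreal_plus[symmetric] mult.commute del: ennreal_plus)
      finally show False
        using le[of m] by simp
    qed
  qed
qed

text \<open>E(Z m) \<le> E min (Z m) N + \<beta> E f(Z m), and the first term tends to 0.\<close>
lemma (in prob_space) eventually_nn_integral_less:
  fixes Z :: "nat \<Rightarrow> 'a \<Rightarrow> nat" and f :: "nat \<Rightarrow> real"
  assumes [measurable]: "\<And>m. Z m \<in> M \<rightarrow>\<^sub>M count_space UNIV"
    and Z_0: "AE x in M. eventually (\<lambda>m. Z m x = 0) sequentially"
    and f: "\<And>n. f n \<ge> 0" "\<And>n. real n \<le> real (min n N) + \<beta> * f n"
    and mean: "\<And>m. (\<integral>\<^sup>+x. ennreal (f (Z m x)) \<partial>M) \<le> ennreal F"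
    and "F \<ge> 0" "\<beta> \<ge> 0" "\<beta> * F < u"
  shows "eventually (\<lambda>m. (\<integral>\<^sup>+x. ennreal (real (Z m x)) \<partial>M) < ennreal u) sequentially"
proof -
  let ?K = "\<lambda>m. \<integral>\<^sup>+x. ennreal (real (min (Z m x) N)) \<partial>M"
  let ?I = "\<lambda>m. \<integral>\<^sup>+x. ennreal (real (Z m x)) \<partial>M"
  have le: "?I m \<le> ?K m + ennreal (\<beta> * F)" for m
  proof -
    have "?I m \<le> (\<integral>\<^sup>+x. ennreal (real (min (Z m x) N)) + ennreal \<beta> * ennreal (f (Z m x)) \<partial>M)"
      using f \<open>\<beta> \<ge> 0\<close>
      by (intro nn_integral_mono) (simp add: ennreal_leI ennreal_plus[symmetric] ennreal_mult[symmetric] del: ennreal_plus of_nat_min)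
    also have "\<dots> = ?K m + ennreal \<beta> * (\<integral>\<^sup>+x. ennreal (f (Z m x)) \<partial>M)"
      by (simp add: nn_integral_add nn_integral_cmult del: of_nat_min)
    also have "\<dots> \<le> ?K m + ennreal (\<beta> * F)"
      using mean[of m] \<open>\<beta> \<ge> 0\<close> \<open>F \<ge> 0\<close> by (simp add: ennreal_mult mult_left_mono add_left_mono)
    finally show ?thesis .
  qed
  have "eventually (\<lambda>m. ?K m < ennreal (u - \<beta> * F)) sequentially"
    using nn_integral_trunc_tendsto_0[of Z real, OF _ Z_0] \<open>\<beta> * F < u\<close> by (intro order_tendstoD) auto
  then show ?thesis
  proof (rule eventually_mono)
    fix m assume K: "?K m < ennreal (u - \<beta> * F)"
    have "?I m < ennreal (u - \<beta> * F) + ennreal (\<beta> * F)"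
      using le[of m] K by (intro order_le_less_trans[OF le[of m]] ennreal_add_less_add_le) auto
    also have "\<dots> = ennreal u"
      using \<open>\<beta> * F < u\<close> \<open>\<beta> \<ge> 0\<close> \<open>F \<ge> 0\<close> by (simp add: ennreal_plus[symmetric] del: ennreal_plus)
    finally show "?I m < ennreal u" .
  qed
qed

definition path_prefix :: "(nat \<Rightarrow> 'a \<Rightarrow> nat) \<Rightarrow> nat \<Rightarrow> 'a \<Rightarrow> nat list" where
  "path_prefix X n x = map (\<lambda>i. X i x) [0..<Suc n]"

lemma path_prefix_eq_iff:
  "path_prefix X n x = s \<longleftrightarrow> length s = Suc n \<and> (\<forall>i\<le>n. X i x = s ! i)"
  unfolding path_prefix_def
  by (auto simp: list_eq_iff_nth_eq less_Suc_eq_le nth_map_upt simp del: upt_Suc)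

lemma take_path_prefix: "i \<le> n \<Longrightarrow> take (Suc i) (path_prefix X n x) = path_prefix X i x"
  unfolding path_prefix_def by (simp add: take_map del: upt_Suc)

lemma nat_stopping_time_eq_path:
  "nat_stopping_time M X T \<Longrightarrow>
    \<exists>B. {x\<in>space M. T x = enat n} = {x\<in>space M. path_prefix X n x \<in> B}"
  unfolding nat_stopping_time_def path_prefix_def by blast

lemma nat_stopping_time_le_path:
  assumes "nat_stopping_time M X T"
  shows "\<exists>B. {x\<in>space M. T x \<le> enat n} = {x\<in>space M. path_prefix X n x \<in> B}"
proof -
  have "\<forall>i. \<exists>B. {x\<in>space M. T x = enat i} = {x\<in>space M. path_prefix X i x \<in> B}"
    using nat_stopping_time_eq_path[OF assms] by blast
  then obtain B where B: "\<And>i. {x\<in>space M. T x = enat i} = {x\<in>space M. path_prefix X i x \<in> B i}"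
    by (auto dest: choice)
  have "{x\<in>space M. T x \<le> enat n}
      = {x\<in>space M. path_prefix X n x \<in> {s. \<exists>i\<le>n. take (Suc i) s \<in> B i}}"
  proof (intro set_eqI iffI)
    fix x assume x: "x \<in> {x\<in>space M. T x \<le> enat n}"
    then obtain i where i: "T x = enat i" "i \<le> n"
      by (cases "T x") auto
    then have "path_prefix X i x \<in> B i"
      using B[of i] x by blast
    then show "x \<in> {x\<in>space M. path_prefix X n x \<in> {s. \<exists>i\<le>n. take (Suc i) s \<in> B i}}"
      using i x take_path_prefix[of i n X x] by auto
  next
    fix x assume x: "x \<in> {x\<in>space M. path_prefix X n x \<in> {s. \<exists>i\<le>n. take (Suc i) s \<in> B i}}"
    then obtain i where i: "i \<le> n" "path_prefix X i x \<in> B i"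
      using x by (auto simp: take_path_prefix)
    then have "T x = enat i"
      using B[of i] x by blast
    then show "x \<in> {x\<in>space M. T x \<le> enat n}"
      using i x by auto
  qed
  then show ?thesis
    by (rule exI[of _ "{s. \<exists>i\<le>n. take (Suc i) s \<in> B i}"])
qed

definition trunc_time :: "('a \<Rightarrow> enat) \<Rightarrow> nat \<Rightarrow> 'a \<Rightarrow> nat" where
  "trunc_time T n x = (case T x of enat t \<Rightarrow> min t n | \<infinity> \<Rightarrow> n)"

lemma enat_trunc_time_le: "enat (trunc_time T n x) \<le> T x"
  by (cases "T x") (auto simp: trunc_time_def)

lemma trunc_time_step:
  "n \<le> m \<Longrightarrow> m \<le> Suc n \<Longrightarrow> trunc_time T m x = (if T x \<le> enat n then trunc_time T n x else m)"
  by (cases "T x") (auto simp: trunc_time_def)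

lemma hit_zero_eq_infinity_iff: "hit_zero X x = \<infinity> \<longleftrightarrow> (\<forall>n. X n x \<noteq> 0)"
  unfolding hit_zero_def by auto

lemma hit_zero_enatD: "hit_zero X x = enat h \<Longrightarrow> X h x = 0"
  unfolding hit_zero_def by (auto split: if_splits intro: LeastI)

definition bd_expect :: "(nat \<Rightarrow> real) \<Rightarrow> (nat \<Rightarrow> real) \<Rightarrow> (nat \<Rightarrow> nat \<Rightarrow> ennreal) \<Rightarrow> nat \<Rightarrow> ennreal" where
  "bd_expect l r g a = (\<Sum>j. ennreal (bd_trans l r a j) * g a j)"

lemma bd_expect_0: "bd_expect l r g 0 = g 0 0"
proof -
  have "bd_expect l r g 0 = (\<Sum>j\<in>{0}. ennreal (bd_trans l r 0 j) * g 0 j)"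
    unfolding bd_expect_def by (rule suminf_finite) (auto simp: bd_trans_def)
  then show ?thesis
    by (simp add: bd_trans_def)
qed

lemma bd_expect_pos:
  assumes "a \<ge> 1"
  shows "bd_expect l r g a = ennreal (r a) * g a (Suc a) + ennreal (l a) * g a (a - 1)"
proof -
  have "a - 1 \<noteq> Suc a"
    by arith
  have "bd_expect l r g a = (\<Sum>j\<in>{a - 1, Suc a}. ennreal (bd_trans l r a j) * g a j)"
    unfolding bd_expect_def by (rule suminf_finite) (use assms in \<open>auto simp: bd_trans_def\<close>)
  also have "\<dots> = ennreal (r a) * g a (Suc a) + ennreal (l a) * g a (a - 1)"
    using assms \<open>a - 1 \<noteq> Suc a\<close> by (simp add: bd_trans_def add.commute)
  finally show ?thesis .
qed

definition ratio_prod :: "(nat \<Rightarrow> real) \<Rightarrow> (nat \<Rightarrow> real) \<Rightarrow> nat \<Rightarrow> real" where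
  "ratio_prod l r j = (\<Prod>i=1..j. l i / r i)"

definition scale :: "(nat \<Rightarrow> real) \<Rightarrow> (nat \<Rightarrow> real) \<Rightarrow> nat \<Rightarrow> real" where
  "scale l r n = (\<Sum>j<n. ratio_prod l r j)"

lemma t_seq_eq_ratio_prod: "t_seq l r n = ratio_prod l r n"
  unfolding t_seq_def ratio_prod_def by (simp add: prod_dividef)

lemma scale_Suc: "scale l r (Suc n) = scale l r n + ratio_prod l r n"
  unfolding scale_def by simp

locale birth_death_chain =
  fixes M :: "'a measure" and l r :: "nat \<Rightarrow> real" and k :: nat and X :: "nat \<Rightarrow> 'a \<Rightarrow> nat"
  assumes lr_pos: "\<And>n. n \<ge> 1 \<Longrightarrow> l n > 0 \<and> r n > 0"
    and lr_sum: "\<And>n. n \<ge> 1 \<Longrightarrow> l n + r n = 1"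
    and chain: "bd_chain M l r k X"
begin

sublocale prob_space M
  using chain unfolding bd_chain_def by auto

lemma measurable_X[measurable]: "X m \<in> M \<rightarrow>\<^sub>M count_space UNIV"
  using chain unfolding bd_chain_def by auto

lemma AE_X_0: "AE x in M. X 0 x = k"
  using chain unfolding bd_chain_def by auto

lemma measurable_path_prefix[measurable]: "path_prefix X n \<in> M \<rightarrow>\<^sub>M count_space UNIV"
proof -
  have "{x \<in> space M. path_prefix X n x = s} \<in> sets M" for s
  proof -
    have "{x \<in> space M. path_prefix X n x = s}
        = {x \<in> space M. length s = Suc n \<and> (\<forall>i\<in>{..n}. X i x = s ! i)}"
      by (auto simp: path_prefix_eq_iff)
    also have "\<dots> \<in> sets M"
      by measurable
    finally show ?thesis .
  qed
  then show ?thesis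
    by (auto simp: measurable_count_space_eq2_countable vimage_def Int_def conj_commute)
qed

lemma emeasure_path_prefix_next:
  assumes "length s = Suc n"
  shows "emeasure M {x\<in>space M. path_prefix X n x = s \<and> X (Suc n) x = j}
       = ennreal (bd_trans l r (s!n) j) * emeasure M {x\<in>space M. path_prefix X n x = s}"
proof -
  have "bd_trans l r (s!n) j \<ge> 0"
    using lr_pos[of "s!n"] by (auto simp: bd_trans_def)
  moreover have "{x\<in>space M. path_prefix X n x = s \<and> X (Suc n) x = j}
      = {x \<in> space M. (\<forall>i\<le>n. X i x = s ! i) \<and> X (Suc n) x = j}"
    "{x\<in>space M. path_prefix X n x = s} = {x \<in> space M. \<forall>i\<le>n. X i x = s ! i}"
    using assms by (auto simp: path_prefix_eq_iff)
  ultimately show ?thesis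
    using chain unfolding bd_chain_def emeasure_eq_measure by (simp add: ennreal_mult)
qed

lemma nn_integral_next_on_path_set:
  shows "(\<integral>\<^sup>+x. indicator {x\<in>space M. path_prefix X n x \<in> B} x * g (X n x) (X (Suc n) x) \<partial>M)
       = (\<integral>\<^sup>+x. indicator {x\<in>space M. path_prefix X n x \<in> B} x * bd_expect l r g (X n x) \<partial>M)"
    (is "(\<integral>\<^sup>+x. ?C x * _ \<partial>M) = _")
proof -
  let ?A = "\<lambda>s. {x\<in>space M. path_prefix X n x = s}"
  have on_path: "(\<integral>\<^sup>+x. (?C x * g (X n x) (X (Suc n) x)) * indicator (?A s) x \<partial>M)
      = (\<integral>\<^sup>+x. (?C x * bd_expect l r g (X n x)) * indicator (?A s) x \<partial>M)" for s
  proof (cases "length s = Suc n")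
    case False
    then have "?A s = {}"
      by (auto simp: path_prefix_eq_iff)
    then show ?thesis
      by simp
  next
    case len: True
    have Xn: "x \<in> ?A s \<Longrightarrow> X n x = s ! n" for x
      by (auto simp: path_prefix_eq_iff)
    have "(\<integral>\<^sup>+x. (?C x * g (X n x) (X (Suc n) x)) * indicator (?A s) x \<partial>M)
        = (\<integral>\<^sup>+x. (indicator B s * g (s!n) (X (Suc n) x)) * indicator (?A s) x \<partial>M)"
      by (intro nn_integral_cong) (auto simp: Xn split: split_indicator)
    also have "\<dots> = (\<integral>\<^sup>+j. (\<integral>\<^sup>+x. (indicator B s * g (s!n) j) * indicator {x\<in>space M. path_prefix X n x = s \<and> X (Suc n) x = j} x \<partial>M) \<partial>count_space UNIV)"
      by (subst nn_integral_split_countable[where Z="X (Suc n)"])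
        (auto intro!: nn_integral_cong split: split_indicator)
    also have "\<dots> = (\<integral>\<^sup>+j. (indicator B s * emeasure M (?A s)) * (ennreal (bd_trans l r (s!n) j) * g (s!n) j) \<partial>count_space UNIV)"
    proof (intro nn_integral_cong)
      fix j
      show "(\<integral>\<^sup>+x. (indicator B s * g (s!n) j) * indicator {x\<in>space M. path_prefix X n x = s \<and> X (Suc n) x = j} x \<partial>M)
          = (indicator B s * emeasure M (?A s)) * (ennreal (bd_trans l r (s!n) j) * g (s!n) j)"
        by (subst nn_integral_cmult_indicator) (auto simp: emeasure_path_prefix_next[OF len] mult_ac)
    qed
    also have "\<dots> = (indicator B s * emeasure M (?A s)) * bd_expect l r g (s!n)"
      by (simp add: nn_integral_cmult nn_integral_count_space_nat bd_expect_def)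
    also have "\<dots> = (\<integral>\<^sup>+x. (indicator B s * bd_expect l r g (s!n)) * indicator (?A s) x \<partial>M)"
      by (subst nn_integral_cmult_indicator) (simp_all add: mult_ac)
    also have "\<dots> = (\<integral>\<^sup>+x. (?C x * bd_expect l r g (X n x)) * indicator (?A s) x \<partial>M)"
      by (intro nn_integral_cong) (auto simp: Xn split: split_indicator)
    finally show ?thesis .
  qed
  show ?thesis
    by (subst (1 2) nn_integral_split_countable[where Z="path_prefix X n"]) (simp_all add: on_path)
qed

lemma nn_integral_next:
  "(\<integral>\<^sup>+x. g (X n x) (X (Suc n) x) \<partial>M) = (\<integral>\<^sup>+x. bd_expect l r g (X n x) \<partial>M)"
proof -
  have "(\<integral>\<^sup>+x. indicator (space M) x * f x \<partial>M) = integral\<^sup>N M f" for f :: "'a \<Rightarrow> ennreal"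
    by (intro nn_integral_cong) simp
  then show ?thesis
    using nn_integral_next_on_path_set[of n UNIV g] by simp
qed

lemma AE_transition_possible: "AE x in M. \<forall>n. bd_trans l r (X n x) (X (Suc n) x) \<noteq> 0"
proof -
  have "AE x in M. bd_trans l r (X n x) (X (Suc n) x) \<noteq> 0" for n
  proof -
    let ?g = "\<lambda>a b. if bd_trans l r a b = 0 then (1::ennreal) else 0"
    have "bd_expect l r ?g a = 0" for a
      by (simp add: bd_expect_def suminf_eq_zero_iff)
    then have "(\<integral>\<^sup>+x. ?g (X n x) (X (Suc n) x) \<partial>M) = 0"
      by (subst nn_integral_next) simp
    then have "AE x in M. ?g (X n x) (X (Suc n) x) = 0"
      by (subst (asm) nn_integral_0_iff_AE) auto
    then show ?thesis
      by (auto split: if_splits)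
  qed
  then show ?thesis
    by (simp add: AE_all_countable)
qed

lemma measurable_stopping_time:
  assumes "nat_stopping_time M X T"
  shows "T \<in> M \<rightarrow>\<^sub>M count_space UNIV"
proof -
  have eq: "{x\<in>space M. T x = enat n} \<in> sets M" for n
    using nat_stopping_time_eq_path[OF assms, of n] by (auto simp del: upt_Suc)
  have "T -` {a} \<inter> space M \<in> sets M" for a
  proof (cases a)
    case (enat n)
    then show ?thesis
      using eq[of n] by (simp add: vimage_def Int_def conj_commute)
  next
    case infinity
    then have "T -` {a} \<inter> space M = space M - (\<Union>n. {x\<in>space M. T x = enat n})"
      by (force simp: not_infinity_eq)
    then show ?thesis
      using eq by auto
  qed
  then show ?thesis
    by (auto simp: measurable_count_space_eq2_countable)
qed

lemma measurable_X_trunc_time[measurable]: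
  assumes "nat_stopping_time M X T"
  shows "(\<lambda>x. X (trunc_time T n x) x) \<in> M \<rightarrow>\<^sub>M count_space UNIV"
proof -
  have "trunc_time T n \<in> M \<rightarrow>\<^sub>M count_space UNIV"
    unfolding trunc_time_def by (rule measurable_compose[OF measurable_stopping_time[OF assms]]) simp
  then show ?thesis
    by (rule measurable_compose_countable[OF measurable_X])
qed

lemma nn_integral_harmonic_trunc_time:
  assumes T: "nat_stopping_time M X T" and harmonic: "\<And>a. bd_expect l r (\<lambda>a b. F b) a = F a"
  shows "(\<integral>\<^sup>+x. F (X (trunc_time T n x) x) \<partial>M) = F k"
proof (induction n)
  case 0
  have "(\<integral>\<^sup>+x. F (X (trunc_time T 0 x) x) \<partial>M) = (\<integral>\<^sup>+x. F k \<partial>M)"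
    using AE_X_0 by (intro nn_integral_cong_AE) (auto simp: trunc_time_def split: enat.splits)
  then show ?case
    by (simp add: emeasure_space_1)
next
  case (Suc n)
  obtain B where B: "{x\<in>space M. T x \<le> enat n} = {x\<in>space M. path_prefix X n x \<in> B}"
    using nat_stopping_time_le_path[OF T] by blast
  let ?D = "indicator {x\<in>space M. path_prefix X n x \<in> B} :: 'a \<Rightarrow> ennreal"
  let ?C = "indicator {x\<in>space M. path_prefix X n x \<notin> B} :: 'a \<Rightarrow> ennreal"
  have [measurable]: "{x\<in>space M. path_prefix X n x \<in> B} \<in> sets M"
    "{x\<in>space M. path_prefix X n x \<notin> B} \<in> sets M"
    "(\<lambda>x. F (X (trunc_time T n x) x)) \<in> borel_measurable M"
    using measurable_X_trunc_time[OF T] by measurable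
  have split: "(\<integral>\<^sup>+x. F (X (trunc_time T m x) x) \<partial>M)
      = (\<integral>\<^sup>+x. ?D x * F (X (trunc_time T n x) x) \<partial>M) + (\<integral>\<^sup>+x. ?C x * F (X m x) \<partial>M)"
    if "n \<le> m" "m \<le> Suc n" for m
  proof -
    have "F (X (trunc_time T m x) x) = ?D x * F (X (trunc_time T n x) x) + ?C x * F (X m x)"
      if "x \<in> space M" for x
    proof -
      have "path_prefix X n x \<in> B \<longleftrightarrow> T x \<le> enat n"
        using that B by blast
      then show ?thesis
        using that \<open>n \<le> m\<close> \<open>m \<le> Suc n\<close> by (simp add: trunc_time_step split: split_indicator)
    qed
    then show ?thesis
      by (simp add: nn_integral_add cong: nn_integral_cong)
  qed
  have "(\<integral>\<^sup>+x. ?C x * F (X (Suc n) x) \<partial>M) = (\<integral>\<^sup>+x. ?C x * F (X n x) \<partial>M)"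
    using nn_integral_next_on_path_set[of n "-B" "\<lambda>a b. F b"] by (simp add: harmonic)
  then have "(\<integral>\<^sup>+x. F (X (trunc_time T (Suc n) x) x) \<partial>M) = (\<integral>\<^sup>+x. F (X (trunc_time T n x) x) \<partial>M)"
    using split[of "Suc n"] split[of n] by simp
  with Suc show ?case
    by simp
qed

section \<open>The scale function\<close>

abbreviation "q \<equiv> ratio_prod l r"
abbreviation "\<phi> \<equiv> scale l r"

lemma ratio_prod_pos: "q j > 0"
  unfolding ratio_prod_def using lr_pos by (auto intro!: prod_pos divide_pos_pos)

lemma ratio_prod_balance: "n \<ge> 1 \<Longrightarrow> r n * q n = l n * q (n - 1)"
  using lr_pos[of n] by (cases n) (auto simp: ratio_prod_def field_simps)

lemma scale_0[simp]: "\<phi> 0 = 0"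
  by (simp add: scale_def)

lemma scale_1: "\<phi> 1 = 1"
  by (simp add: scale_def ratio_prod_def)

lemma scale_mono: "m \<le> n \<Longrightarrow> \<phi> m \<le> \<phi> n"
  unfolding scale_def using ratio_prod_pos by (intro sum_mono2) (auto intro: less_imp_le)

lemma scale_nonneg: "\<phi> n \<ge> 0"
  using scale_mono[of 0 n] by simp

lemma scale_pos: "n \<ge> 1 \<Longrightarrow> \<phi> n > 0"
  using scale_mono[of 1 n] scale_1 by simp

lemma scale_harmonic:
  assumes "n \<ge> 1"
  shows "r n * \<phi> (Suc n) + l n * \<phi> (n - 1) = \<phi> n"
proof -
  have "\<phi> (Suc n) = \<phi> n + q n" "\<phi> n = \<phi> (n - 1) + q (n - 1)"
    using assms scale_Suc[of l r "n - 1"] by (simp_all add: scale_Suc)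
  then show ?thesis
    using lr_sum[OF assms] ratio_prod_balance[OF assms] by algebra
qed

lemma bd_expect_scale: "bd_expect l r (\<lambda>a b. ennreal (\<phi> b)) a = ennreal (\<phi> a)"
proof (cases "a \<ge> 1")
  case True
  then have "bd_expect l r (\<lambda>a b. ennreal (\<phi> b)) a = ennreal (r a * \<phi> (Suc a) + l a * \<phi> (a - 1))"
    using lr_pos[OF True] scale_nonneg
    by (simp add: bd_expect_pos ennreal_plus[symmetric] ennreal_mult[symmetric] del: ennreal_plus)
  then show ?thesis
    using scale_harmonic[OF True] by simp
next
  case False
  then have "a = 0"
    by simp
  then show ?thesis
    by (simp add: bd_expect_0)
qed

lemma nn_integral_scale_trunc_time:
  "nat_stopping_time M X T \<Longrightarrow> (\<integral>\<^sup>+x. ennreal (\<phi> (X (trunc_time T n x) x)) \<partial>M) = ennreal (\<phi> k)"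
  by (rule nn_integral_harmonic_trunc_time) (simp_all add: bd_expect_scale)

lemma nn_integral_scale_X: "(\<integral>\<^sup>+x. ennreal (\<phi> (X n x)) \<partial>M) = ennreal (\<phi> k)"
proof -
  have "nat_stopping_time M X (\<lambda>_. \<infinity>)"
    unfolding nat_stopping_time_def by (intro allI exI[of _ "{}"]) auto
  from nn_integral_scale_trunc_time[OF this, of n] show ?thesis
    by (simp add: trunc_time_def)
qed

lemma scale_le_of_bd_trans:
  assumes "bd_trans l r a b \<noteq> 0" and "\<And>j. q j \<le> C"
  shows "\<phi> b \<le> \<phi> a + C"
proof -
  have "0 \<le> C"
    using assms(2)[of 0] ratio_prod_pos[of 0] by simp
  moreover have "b = 0 \<and> a = 0 \<or> a \<ge> 1 \<and> b = Suc a \<or> a \<ge> 1 \<and> b \<le> a"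
    using assms(1) by (auto simp: bd_trans_def split: if_splits)
  ultimately show ?thesis
    using scale_Suc[of l r a] assms(2)[of a] scale_mono[of b a] by auto
qed

lemma AE_scale_X_le:
  assumes "\<And>j. q j \<le> C"
  shows "AE x in M. \<forall>j. \<phi> (X j x) \<le> \<phi> k + C * j"
  using AE_X_0 AE_transition_possible
proof eventually_elim
  case (elim x)
  show ?case
  proof
    fix j
    show "\<phi> (X j x) \<le> \<phi> k + C * j"
    proof (induction j)
      case (Suc j)
      then show ?case
        using scale_le_of_bd_trans[OF elim(2)[rule_format, of j] assms] by (simp add: algebra_simps)
    qed (simp add: elim(1))
  qed
qed

lemma linear_tail_le_scale:
  assumes "\<forall>j\<ge>N. c \<le> q j"
  shows "c * (real n - real (min n N)) \<le> \<phi> n"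
proof (induction n)
  case (Suc n)
  show ?case
  proof (cases "n < N")
    case True
    then show ?thesis
      using scale_nonneg[of "Suc n"] by simp
  next
    case False
    then show ?thesis
      using Suc assms[rule_format, of n] scale_Suc[of l r n] by (simp add: algebra_simps)
  qed
qed simp

lemma scale_le_linear_tail:
  assumes "\<forall>j\<ge>N. q j \<le> a" and "a \<ge> 0"
  shows "\<phi> n \<le> \<phi> (min n N) + a * n"
proof (induction n)
  case (Suc n)
  show ?case
  proof (cases "n < N")
    case True
    then show ?thesis
      using assms(2) by simp
  next
    case False
    then show ?thesis
      using Suc assms(1)[rule_format, of n] scale_Suc[of l r n] by (simp add: algebra_simps)
  qed
qed simp

lemma filterlim_scale_at_top:
  assumes "eventually (\<lambda>j. c < q j) sequentially" and "c > 0"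
  shows "filterlim \<phi> at_top sequentially"
proof -
  obtain N where "\<forall>j\<ge>N. c < q j"
    using assms(1) by (auto simp: eventually_sequentially)
  then have tail: "\<forall>j\<ge>N. c \<le> q j"
    using less_imp_le by blast
  have "filterlim (\<lambda>n. c * real n) at_top sequentially"
    by (rule filterlim_tendsto_pos_mult_at_top[OF tendsto_const \<open>c > 0\<close> filterlim_real_sequentially])
  then have lim: "filterlim (\<lambda>n. - (c * real N) + c * real n) at_top sequentially"
    by (rule filterlim_tendsto_add_at_top[OF tendsto_const])
  have bound: "- (c * real N) + c * real n \<le> \<phi> n" for n
  proof (cases "n \<le> N")
    case True
    then have "c * real n \<le> c * real N"
      using \<open>c > 0\<close> by simp
    then show ?thesis
      using scale_nonneg[of n] by simp
  next
    case False
    then show ?thesis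
      using linear_tail_le_scale[where n=n, OF tail] by (simp add: algebra_simps)
  qed
  show ?thesis
    by (rule filterlim_at_top_mono[OF lim]) (intro always_eventually allI bound)
qed

section \<open>Escape to infinity\<close>

text \<open>Since \<phi>(X) is a martingale, \<phi>(X)^2 is a submartingale whose drift at n \<ge> 1 is
  r n q n^2 + l n q (n-1)^2 > 0. Continuing the square linearly beyond N+1 keeps it
  a submartingale, now of linear growth in \<phi> and hence with bounded expectation.\<close>
definition sq_scale_cap :: "nat \<Rightarrow> nat \<Rightarrow> real" where
  "sq_scale_cap N n = (if n \<le> Suc N then \<phi> n ^ 2 else 2 * \<phi> (Suc N) * \<phi> n - \<phi> (Suc N) ^ 2)"

lemma sq_scale_cap_linear: "n \<ge> Suc N \<Longrightarrow> sq_scale_cap N n = 2 * \<phi> (Suc N) * \<phi> n - \<phi> (Suc N) ^ 2"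
  unfolding sq_scale_cap_def by (cases "n = Suc N") (auto simp: power2_eq_square)

lemma sq_scale_cap_nonneg: "sq_scale_cap N n \<ge> 0"
proof (cases "n \<le> Suc N")
  case False
  have "\<phi> (Suc N) * \<phi> (Suc N) \<le> \<phi> (Suc N) * \<phi> n" "0 \<le> \<phi> (Suc N) * \<phi> n"
    using False mult_left_mono[OF scale_mono[of "Suc N" n] scale_nonneg] scale_nonneg by auto
  then show ?thesis
    using False unfolding sq_scale_cap_def by (simp add: power2_eq_square)
qed (simp add: sq_scale_cap_def)

lemma sq_scale_cap_le: "sq_scale_cap N n \<le> 2 * \<phi> (Suc N) * \<phi> n"
proof (cases "n \<le> Suc N")
  case True
  have "\<phi> n * \<phi> n \<le> \<phi> (Suc N) * \<phi> n" "0 \<le> \<phi> (Suc N) * \<phi> n"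
    using True mult_right_mono[OF scale_mono[of n "Suc N"] scale_nonneg] scale_nonneg by auto
  then show ?thesis
    using True unfolding sq_scale_cap_def by (simp add: power2_eq_square)
qed (simp add: sq_scale_cap_def)

lemma sq_scale_cap_drift:
  assumes n: "n \<ge> 1"
  shows "r n * sq_scale_cap N (Suc n) + l n * sq_scale_cap N (n - 1)
     \<ge> sq_scale_cap N n + (if n \<le> N then r n * q n ^ 2 else 0)"
proof -
  have s: "l n + r n = 1" and lp: "l n > 0" "r n > 0"
    using lr_sum[OF n] lr_pos[OF n] by auto
  have p1: "\<phi> (Suc n) = \<phi> n + q n" and p2: "\<phi> (n - 1) = \<phi> n - q (n - 1)"
    using scale_Suc[of l r n] scale_Suc[of l r "n - 1"] n by simp_all
  have rec: "r n * q n = l n * q (n - 1)"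
    by (rule ratio_prod_balance[OF n])
  let ?a = "\<phi> (Suc N)"
  consider "n \<le> N" | "n = Suc N" | "n > Suc N"
    by linarith
  then show ?thesis
  proof cases
    case 1
    then have "sq_scale_cap N (Suc n) = (\<phi> n + q n)^2" "sq_scale_cap N (n - 1) = (\<phi> n - q (n - 1))^2"
      "sq_scale_cap N n = \<phi> n ^ 2"
      using p1 p2 by (auto simp: sq_scale_cap_def)
    moreover have "r n * (\<phi> n + q n)^2 + l n * (\<phi> n - q (n - 1))^2
       = (l n + r n) * \<phi> n ^ 2 + 2 * \<phi> n * (r n * q n - l n * q (n - 1)) + r n * q n ^ 2 + l n * q (n - 1) ^ 2"
      by (simp add: power2_eq_square algebra_simps)
    ultimately show ?thesis
      using 1 s rec lp by simp
  next
    case 2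
    then have "sq_scale_cap N (Suc n) = 2 * ?a * (?a + q n) - ?a^2"
      "sq_scale_cap N (n - 1) = (?a - q (n - 1))^2" "sq_scale_cap N n = ?a ^ 2"
      using p1 p2 by (auto simp: sq_scale_cap_def)
    moreover have "r n * (2 * ?a * (?a + q n) - ?a^2) + l n * (?a - q (n - 1))^2
       = (l n + r n) * ?a ^ 2 + 2 * ?a * (r n * q n - l n * q (n - 1)) + l n * q (n - 1) ^ 2"
      by (simp add: power2_eq_square algebra_simps)
    ultimately show ?thesis
      using 2 s rec lp by simp
  next
    case 3
    have "r n * (2 * ?a * \<phi> (Suc n) - ?a^2) + l n * (2 * ?a * \<phi> (n - 1) - ?a^2)
       = 2 * ?a * (r n * \<phi> (Suc n) + l n * \<phi> (n - 1)) - (l n + r n) * ?a^2"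
      by (simp add: algebra_simps)
    then show ?thesis
      using 3 s scale_harmonic[OF n] by (simp add: sq_scale_cap_linear)
  qed
qed

lemma bd_expect_sq_scale_cap:
  assumes "N \<ge> 1"
  obtains c where "c > 0"
    "\<And>a. ennreal (sq_scale_cap N a) + ennreal c * indicator {1..N} a
       \<le> bd_expect l r (\<lambda>a b. ennreal (sq_scale_cap N b)) a"
proof
  define c where "c = Min ((\<lambda>n. r n * q n ^ 2) ` {1..N})"
  show "c > 0"
  proof -
    have "0 < r n * q n ^ 2" if "n \<in> {1..N}" for n
      using that lr_pos[of n] ratio_prod_pos[of n] by simp
    then show ?thesis
      unfolding c_def using assms by (subst Min_gr_iff) auto
  qed
  fix a
  show "ennreal (sq_scale_cap N a) + ennreal c * indicator {1..N} a
       \<le> bd_expect l r (\<lambda>a b. ennreal (sq_scale_cap N b)) a"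
  proof (cases "a \<ge> 1")
    case True
    have "c \<le> r a * q a ^ 2" if "a \<le> N"
      unfolding c_def using True that by (intro Min_le) auto
    then have "sq_scale_cap N a + c * indicator {1..N} a \<le> r a * sq_scale_cap N (Suc a) + l a * sq_scale_cap N (a - 1)"
      using sq_scale_cap_drift[OF True, of N] True by (auto simp: indicator_def split: if_splits)
    moreover have "ennreal (sq_scale_cap N a) + ennreal c * indicator {1..N} a
        = ennreal (sq_scale_cap N a + c * indicator {1..N} a)"
      using \<open>c > 0\<close> sq_scale_cap_nonneg by (simp add: ennreal_plus ennreal_mult ennreal_indicator)
    moreover have "bd_expect l r (\<lambda>a b. ennreal (sq_scale_cap N b)) a
        = ennreal (r a * sq_scale_cap N (Suc a) + l a * sq_scale_cap N (a - 1))"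
      using True lr_pos[OF True] sq_scale_cap_nonneg
      by (simp add: bd_expect_pos ennreal_plus[symmetric] ennreal_mult[symmetric] del: ennreal_plus)
    ultimately show ?thesis
      by (simp add: ennreal_leI)
  next
    case False
    then have "a = 0"
      by simp
    then show ?thesis
      by (simp add: bd_expect_0)
  qed
qed

lemma summable_prob_visits:
  assumes "N \<ge> 1"
  shows "summable (\<lambda>i. prob {x\<in>space M. X i x \<in> {1..N}})"
proof -
  obtain c where c: "c > 0" and drift: "\<And>a. ennreal (sq_scale_cap N a) + ennreal c * indicator {1..N} a
      \<le> bd_expect l r (\<lambda>a b. ennreal (sq_scale_cap N b)) a"
    using bd_expect_sq_scale_cap[OF assms] by blast
  let ?A = "\<lambda>i. {x\<in>space M. X i x \<in> {1..N}}"
  let ?EG = "\<lambda>n. \<integral>\<^sup>+x. ennreal (sq_scale_cap N (X n x)) \<partial>M"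
  have sum_le: "ennreal c * (\<Sum>i<n. emeasure M (?A i)) \<le> ?EG n" for n
  proof (induction n)
    case (Suc n)
    have "ennreal c * (\<Sum>i<Suc n. emeasure M (?A i)) \<le> ?EG n + (\<integral>\<^sup>+x. ennreal c * indicator (?A n) x \<partial>M)"
      using Suc by (simp add: distrib_left nn_integral_cmult_indicator add_mono)
    also have "\<dots> = (\<integral>\<^sup>+x. ennreal (sq_scale_cap N (X n x)) + ennreal c * indicator {1..N} (X n x) \<partial>M)"
      by (subst nn_integral_add[symmetric]) (auto intro!: nn_integral_cong split: split_indicator)
    also have "\<dots> \<le> (\<integral>\<^sup>+x. bd_expect l r (\<lambda>a b. ennreal (sq_scale_cap N b)) (X n x) \<partial>M)"
      by (intro nn_integral_mono drift)
    also have "\<dots> = ?EG (Suc n)"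
      by (rule nn_integral_next[symmetric])
    finally show ?case .
  qed simp
  have EG_le: "?EG n \<le> ennreal (2 * \<phi> (Suc N) * \<phi> k)" for n
  proof -
    have "?EG n \<le> (\<integral>\<^sup>+x. ennreal (2 * \<phi> (Suc N)) * ennreal (\<phi> (X n x)) \<partial>M)"
      using sq_scale_cap_le scale_nonneg
      by (intro nn_integral_mono) (simp add: ennreal_mult[symmetric] ennreal_leI)
    also have "\<dots> = ennreal (2 * \<phi> (Suc N) * \<phi> k)"
      using scale_nonneg by (simp add: nn_integral_cmult nn_integral_scale_X ennreal_mult)
    finally show ?thesis .
  qed
  have "ennreal (c * (\<Sum>i<n. prob (?A i))) \<le> ennreal (2 * \<phi> (Suc N) * \<phi> k)" for n
    using order_trans[OF sum_le EG_le] c by (simp add: emeasure_eq_measure ennreal_mult sum_ennreal sum_nonneg)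
  then have "(\<Sum>i<n. prob (?A i)) \<le> 2 * \<phi> (Suc N) * \<phi> k / c" for n
    using c scale_nonneg by (simp add: ennreal_le_iff field_simps)
  then show ?thesis
    by (intro summableI_nonneg_bounded) auto
qed

lemma AE_eventually_not_visits:
  "AE x in M. eventually (\<lambda>n. X n x \<notin> {1..Suc N}) sequentially"
proof -
  have "AE x in M. eventually (\<lambda>n. x \<in> space M - {x\<in>space M. X n x \<in> {1..Suc N}}) sequentially"
    using summable_prob_visits[of "Suc N"] by (intro borel_cantelli_AE1) (auto simp: less_top[symmetric])
  then show ?thesis
    by (auto elim: eventually_mono)
qed

lemma AE_tendsto_infinity_if_not_hit:
  "AE x in M. hit_zero X x = \<infinity> \<longrightarrow> filterlim (\<lambda>n. X n x) at_top sequentially"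
proof -
  have "AE x in M. \<forall>N. eventually (\<lambda>n. X n x \<notin> {1..Suc N}) sequentially"
    by (subst AE_all_countable) (intro allI AE_eventually_not_visits)
  then show ?thesis
  proof eventually_elim
    case (elim x)
    show ?case
    proof
      assume "hit_zero X x = \<infinity>"
      then have nonzero: "X n x \<noteq> 0" for n
        by (simp add: hit_zero_eq_infinity_iff)
      show "filterlim (\<lambda>n. X n x) at_top sequentially"
        unfolding filterlim_at_top
      proof
        fix Z
        have "Z \<le> X n x" if "X n x \<notin> {1..Suc Z}" for n
          using that nonzero[of n] by auto
        then show "eventually (\<lambda>n. Z \<le> X n x) sequentially"
          using elim[rule_format, of Z] by (auto elim: eventually_mono)
      qed
    qed
  qed
qed

lemma measurable_not_hit[measurable]: "{x\<in>space M. hit_zero X x = \<infinity>} \<in> sets M"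
proof -
  have "{x\<in>space M. hit_zero X x = \<infinity>} = (\<Inter>n. {x\<in>space M. X n x \<noteq> 0}) \<inter> space M"
    by (auto simp: hit_zero_eq_infinity_iff)
  then show ?thesis
    by simp
qed

text \<open>If \<phi> is unbounded, then on the event that 0 is never hit \<phi>(X n) \<rightarrow> \<infinity>, which by
  Fatou is incompatible with E \<phi>(X n) = \<phi> k unless the event is null.\<close>
lemma AE_hit_zero:
  assumes "filterlim \<phi> at_top sequentially"
  shows "AE x in M. hit_zero X x \<noteq> \<infinity>"
proof -
  let ?E = "{x\<in>space M. hit_zero X x = \<infinity>}"
  have "AE x in M. x \<in> ?E \<longrightarrow> (\<lambda>n. ennreal (\<phi> (X n x))) \<longlonglongrightarrow> \<top>"
    using AE_tendsto_infinity_if_not_hit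
    by eventually_elim (auto simp: ennreal_tendsto_top_eq_at_top intro: filterlim_compose[OF assms])
  then have "\<top> * emeasure M ?E \<le> liminf (\<lambda>n. \<integral>\<^sup>+x. ennreal (\<phi> (X n x)) \<partial>M)"
    by (intro nn_integral_tendsto_top_liminf) auto
  then have "\<top> * emeasure M ?E \<le> ennreal (\<phi> k)"
    by (simp add: nn_integral_scale_X Liminf_const)
  then have "emeasure M ?E = 0"
    by (cases "emeasure M ?E = 0") (auto simp: ennreal_top_mult_right top_unique)
  then show ?thesis
    by (intro AE_I[where N="?E"]) auto
qed

section \<open>Optional stopping\<close>

context
  fixes T :: "'a \<Rightarrow> enat"
  assumes stopping: "nat_stopping_time M X T"
    and integrable: "(\<integral>\<^sup>+x. ennreal_of_enat (T x) \<partial>M) < \<infinity>"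
begin

lemmas measurable_X_trunc_time_T[measurable] = measurable_X_trunc_time[OF stopping]

lemma measurable_ennreal_of_enat_T[measurable]: "(\<lambda>x. ennreal_of_enat (T x)) \<in> borel_measurable M"
  by (rule measurable_compose[OF measurable_stopping_time[OF stopping]]) simp

lemma AE_stopping_time_finite: "AE x in M. T x \<noteq> \<infinity>"
proof -
  have "AE x in M. ennreal_of_enat (T x) \<noteq> \<infinity>"
    by (rule nn_integral_PInf_AE) (use integrable in simp_all)
  then show ?thesis
    by eventually_elim (metis ennreal_of_enat_infty infinity_ennreal_def)
qed

lemma measurable_stopped_val[measurable]: "stopped_val X T \<in> M \<rightarrow>\<^sub>M count_space UNIV"
proof -
  have "(\<lambda>x. (\<lambda>e x. case e of enat n \<Rightarrow> X n x | \<infinity> \<Rightarrow> 0) (T x) x) \<in> M \<rightarrow>\<^sub>M count_space UNIV"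
  proof (rule measurable_compose_countable[OF _ measurable_stopping_time[OF stopping]])
    fix e :: enat
    show "(\<lambda>x. case e of enat n \<Rightarrow> X n x | \<infinity> \<Rightarrow> 0) \<in> M \<rightarrow>\<^sub>M count_space UNIV"
      by (cases e) simp_all
  qed
  then show ?thesis
    unfolding stopped_val_def[abs_def] by simp
qed

lemma AE_tendsto_X_trunc_time:
  fixes f :: "nat \<Rightarrow> 'b::topological_space"
  shows "AE x in M. (\<lambda>n. f (X (trunc_time T n x) x)) \<longlonglongrightarrow> f (stopped_val X T x)"
  using AE_stopping_time_finite
proof eventually_elim
  case (elim x)
  then obtain t where "T x = enat t"
    by auto
  then have "eventually (\<lambda>n. f (X (trunc_time T n x) x) = f (stopped_val X T x)) sequentially"
    unfolding eventually_sequentially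
    by (intro exI[of _ t]) (auto simp: trunc_time_def stopped_val_def)
  then show ?case
    by (rule tendsto_eventually)
qed

lemma nn_integral_scale_stopped_val_le:
  "(\<integral>\<^sup>+x. ennreal (\<phi> (stopped_val X T x)) \<partial>M) \<le> ennreal (\<phi> k)"
proof -
  let ?u = "\<lambda>n x. ennreal (\<phi> (X (trunc_time T n x) x))"
  have "AE x in M. ennreal (\<phi> (stopped_val X T x)) = liminf (\<lambda>n. ?u n x)"
    using AE_tendsto_X_trunc_time[of "\<lambda>b. ennreal (\<phi> b)"]
    by eventually_elim (simp add: lim_imp_Liminf)
  then have "(\<integral>\<^sup>+x. ennreal (\<phi> (stopped_val X T x)) \<partial>M) = (\<integral>\<^sup>+x. liminf (\<lambda>n. ?u n x) \<partial>M)"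
    by (rule nn_integral_cong_AE)
  also have "\<dots> \<le> liminf (\<lambda>n. \<integral>\<^sup>+x. ?u n x \<partial>M)"
    by (rule nn_integral_liminf) measurable
  also have "\<dots> = ennreal (\<phi> k)"
    by (simp add: nn_integral_scale_trunc_time[OF stopping] Liminf_const)
  finally show ?thesis .
qed

text \<open>The increments of \<phi>(X) are at most C, so the truncations of \<phi>(X_T) are dominated by
  \<phi> k + C T, which is integrable.\<close>
lemma nn_integral_scale_stopped_val:
  assumes "\<And>j. q j \<le> C"
  shows "(\<integral>\<^sup>+x. ennreal (\<phi> (stopped_val X T x)) \<partial>M) = ennreal (\<phi> k)"
proof -
  let ?u = "\<lambda>n x. ennreal (\<phi> (X (trunc_time T n x) x))"
  let ?w = "\<lambda>x. ennreal (\<phi> k) + ennreal C * ennreal_of_enat (T x)"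
  have "0 \<le> C"
    using assms[of 0] ratio_prod_pos[of 0] by simp
  have "AE x in M. ?u n x \<le> ?w x" for n
    using AE_scale_X_le[OF assms]
  proof eventually_elim
    case (elim x)
    then have "?u n x \<le> ennreal (\<phi> k + C * trunc_time T n x)"
      by (simp add: ennreal_leI)
    also have "\<dots> = ennreal (\<phi> k) + ennreal C * ennreal_of_enat (enat (trunc_time T n x))"
      using \<open>0 \<le> C\<close> scale_nonneg by (simp add: ennreal_plus ennreal_mult ennreal_of_nat_eq_real_of_nat)
    also have "\<dots> \<le> ?w x"
      by (intro add_left_mono mult_left_mono) (simp_all add: enat_trunc_time_le del: ennreal_of_enat_enat)
    finally show ?case .
  qed
  moreover have "(\<integral>\<^sup>+x. ?w x \<partial>M) = ennreal (\<phi> k) + ennreal C * (\<integral>\<^sup>+x. ennreal_of_enat (T x) \<partial>M)"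
    by (simp add: nn_integral_add nn_integral_cmult emeasure_space_1)
  with integrable have "(\<integral>\<^sup>+x. ?w x \<partial>M) < \<infinity>"
    by (simp add: ennreal_mult_less_top)
  moreover have "(\<lambda>x. ennreal (\<phi> (stopped_val X T x))) \<in> borel_measurable M" "?w \<in> borel_measurable M"
    "\<And>n. ?u n \<in> borel_measurable M"
    by measurable
  ultimately have "(\<lambda>n. \<integral>\<^sup>+x. ?u n x \<partial>M) \<longlonglongrightarrow> (\<integral>\<^sup>+x. ennreal (\<phi> (stopped_val X T x)) \<partial>M)"
    using AE_tendsto_X_trunc_time by (intro nn_integral_dominated_convergence[where w="?w"]) auto
  then show ?thesis
    by (simp add: nn_integral_scale_trunc_time[OF stopping] LIMSEQ_const_iff)
qed

end

context
  fixes T :: "nat \<Rightarrow> 'a \<Rightarrow> enat"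
  assumes stopping: "\<And>m. nat_stopping_time M X (T m)"
    and integrable: "\<And>m. (\<integral>\<^sup>+x. ennreal_of_enat (T m x) \<partial>M) < \<infinity>"
    and tendsto_hit_zero: "AE x in M. (\<lambda>m. ennreal_of_enat (T m x)) \<longlonglongrightarrow> ennreal_of_enat (hit_zero X x)"
begin

lemma AE_eventually_stopped_val_0:
  "AE x in M. hit_zero X x \<noteq> \<infinity> \<longrightarrow> eventually (\<lambda>m. stopped_val X (T m) x = 0) sequentially"
  using tendsto_hit_zero
proof eventually_elim
  case (elim x)
  show ?case
  proof
    assume "hit_zero X x \<noteq> \<infinity>"
    then obtain h where h: "hit_zero X x = enat h"
      by auto
    then have "eventually (\<lambda>m. T m x = enat h) sequentially"
      using elim by (intro tendsto_enat_eventually_eq) (rule tendsto_enat_of_ennreal_of_enat, simp)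
    then show "eventually (\<lambda>m. stopped_val X (T m) x = 0) sequentially"
      by (rule eventually_mono) (simp add: stopped_val_def hit_zero_enatD[OF h])
  qed
qed

lemma AE_stopped_val_tendsto_infinity:
  "AE x in M. hit_zero X x = \<infinity> \<longrightarrow> filterlim (\<lambda>m. stopped_val X (T m) x) at_top sequentially"
proof -
  have "AE x in M. \<forall>m. T m x \<noteq> \<infinity>"
    using AE_stopping_time_finite[OF stopping integrable] by (simp add: AE_all_countable)
  with tendsto_hit_zero AE_tendsto_infinity_if_not_hit show ?thesis
  proof eventually_elim
    case (elim x)
    show ?case
    proof
      assume hit: "hit_zero X x = \<infinity>"
      have "((\<lambda>m. ennreal_of_enat (T m x)) \<longlongrightarrow> ennreal_of_enat \<infinity>) sequentially"
        using elim(1) hit by simp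
      then have "((\<lambda>m. T m x) \<longlongrightarrow> \<infinity>) sequentially"
        by (rule tendsto_enat_of_ennreal_of_enat)
      then have "filterlim (\<lambda>m. the_enat (T m x)) at_top sequentially"
        by (rule filterlim_the_enat_at_top) (use elim(3) in blast)
      moreover have "filterlim (\<lambda>n. X n x) at_top sequentially"
        using elim(2) hit by blast
      ultimately have "filterlim (\<lambda>m. X (the_enat (T m x)) x) at_top sequentially"
        by (rule filterlim_compose[rotated])
      moreover have "stopped_val X (T m) x = X (the_enat (T m x)) x" for m
        using elim(3)[rule_format, of m] by (auto simp: stopped_val_def)
      ultimately show "filterlim (\<lambda>m. stopped_val X (T m) x) at_top sequentially"
        by simp
    qed
  qed
qed

lemma eventually_less_stopped_mean:
  assumes recurrent: "AE x in M. hit_zero X x \<noteq> \<infinity>" and bounded: "\<And>j. q j \<le> C"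
    and "eventually (\<lambda>j. q j < a) sequentially" "0 \<le> b" "b * a < \<phi> k"
  shows "eventually (\<lambda>m. ennreal b < (\<integral>\<^sup>+x. ennreal (real (stopped_val X (T m) x)) \<partial>M)) sequentially"
proof -
  obtain N where "\<forall>j\<ge>N. q j < a"
    using assms(3) by (auto simp: eventually_sequentially)
  then have tail: "\<forall>j\<ge>N. q j \<le> a"
    using less_imp_le by blast
  have "q N \<le> a"
    using tail by simp
  then have "a > 0"
    using ratio_prod_pos[of N] by linarith
  have "AE x in M. eventually (\<lambda>m. stopped_val X (T m) x = 0) sequentially"
    using recurrent AE_eventually_stopped_val_0 by eventually_elim simp
  moreover have "\<phi> n \<le> \<phi> (min n N) + a * n" for n
    using scale_le_linear_tail[OF tail] \<open>a > 0\<close> by simp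
  ultimately show ?thesis
    by (rule eventually_less_nn_integral[where Z="\<lambda>m. stopped_val X (T m)", OF
          measurable_stopped_val[OF stopping integrable] _ scale_0 scale_nonneg _
          nn_integral_scale_stopped_val[OF stopping integrable bounded] \<open>a > 0\<close> assms(4,5)])
qed

lemma eventually_stopped_mean_less:
  assumes "eventually (\<lambda>j. c < q j) sequentially" "c > 0" "\<phi> k < c * u"
  shows "eventually (\<lambda>m. (\<integral>\<^sup>+x. ennreal (real (stopped_val X (T m) x)) \<partial>M) < ennreal u) sequentially"
proof -
  obtain N where "\<forall>j\<ge>N. c < q j"
    using assms(1) by (auto simp: eventually_sequentially)
  then have tail: "\<forall>j\<ge>N. c \<le> q j"
    using less_imp_le by blast
  have "AE x in M. eventually (\<lambda>m. stopped_val X (T m) x = 0) sequentially"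
    using AE_hit_zero[OF filterlim_scale_at_top[OF assms(1,2)]] AE_eventually_stopped_val_0
    by eventually_elim simp
  moreover have "real n \<le> real (min n N) + 1 / c * \<phi> n" for n
    using linear_tail_le_scale[where n=n, OF tail] \<open>c > 0\<close> by (simp add: field_simps)
  moreover have "0 \<le> 1 / c"
    using \<open>c > 0\<close> by simp
  moreover have "1 / c * \<phi> k < u"
    using assms(2,3) by (simp add: divide_less_eq mult.commute)
  ultimately show ?thesis
    by (rule eventually_nn_integral_less[where Z="\<lambda>m. stopped_val X (T m)", OF
          measurable_stopped_val[OF stopping integrable] _ scale_nonneg _
          nn_integral_scale_stopped_val_le[OF stopping integrable] scale_nonneg])
qed

lemma stopped_mean_tendsto_top:
  assumes "k \<ge> 1" and q: "q \<longlonglongrightarrow> 0"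
  shows "(\<lambda>m. \<integral>\<^sup>+x. ennreal (real (stopped_val X (T m) x)) \<partial>M) \<longlonglongrightarrow> \<top>"
proof (rule ennreal_tendstoI)
  let ?E = "{x\<in>space M. hit_zero X x = \<infinity>}"
  let ?I = "\<lambda>m. \<integral>\<^sup>+x. ennreal (real (stopped_val X (T m) x)) \<partial>M"
  fix b :: real assume "0 \<le> b"
  show "eventually (\<lambda>m. ennreal b < ?I m) sequentially"
  proof (cases "emeasure M ?E = 0")
    case True
    then have recurrent: "AE x in M. hit_zero X x \<noteq> \<infinity>"
      by (intro AE_I[where N="?E"]) auto
    obtain C where "\<And>j. q j \<le> C"
      using Bseq_bdd_above[OF convergent_imp_Bseq[OF convergentI[OF q]]] by (auto simp: bdd_above_def)
    moreover obtain a where "0 < a" "b * a < \<phi> k"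
      using exists_greater_mult_less[of b 0 "\<phi> k"] \<open>0 \<le> b\<close> scale_pos[OF \<open>k \<ge> 1\<close>] by auto
    moreover have "eventually (\<lambda>j. q j < a) sequentially"
      using order_tendstoD(2)[OF q \<open>0 < a\<close>] .
    ultimately show ?thesis
      using recurrent \<open>0 \<le> b\<close> by (intro eventually_less_stopped_mean)
  next
    case False
    text \<open>With positive probability 0 is never hit, and then X_{T m} \<rightarrow> \<infinity>; by Fatou the means diverge.\<close>
    have "AE x in M. x \<in> ?E \<longrightarrow> (\<lambda>m. ennreal (real (stopped_val X (T m) x))) \<longlonglongrightarrow> \<top>"
      using AE_stopped_val_tendsto_infinity
      by eventually_elim
        (auto simp: ennreal_tendsto_top_eq_at_top intro: filterlim_compose[OF filterlim_real_sequentially])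
    moreover have "(\<lambda>x. ennreal (real (stopped_val X (T m) x))) \<in> borel_measurable M" for m
      by (rule measurable_compose[OF measurable_stopped_val[OF stopping integrable]]) simp
    ultimately have "\<top> * emeasure M ?E \<le> liminf ?I"
      by (intro nn_integral_tendsto_top_liminf) auto
    with False have "liminf ?I = \<top>"
      by (simp add: ennreal_top_mult_left top_unique)
    then show ?thesis
      by (intro less_LiminfD) simp
  qed
qed simp

lemma stopped_mean_tendsto_0:
  assumes q: "filterlim q at_top sequentially"
  shows "(\<lambda>m. \<integral>\<^sup>+x. ennreal (real (stopped_val X (T m) x)) \<partial>M) \<longlonglongrightarrow> 0"
proof (rule ennreal_tendstoI)
  fix u :: real assume "0 < u"
  define c where "c = (\<phi> k + 1) / u"
  have "0 < c" "\<phi> k < c * u"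
    unfolding c_def using \<open>0 < u\<close> scale_nonneg[of k] by simp_all
  moreover have "eventually (\<lambda>j. c < q j) sequentially"
    using q by (simp add: filterlim_at_top_dense)
  ultimately show "eventually (\<lambda>m. (\<integral>\<^sup>+x. ennreal (real (stopped_val X (T m) x)) \<partial>M) < ennreal u) sequentially"
    by (intro eventually_stopped_mean_less)
qed simp

lemma stopped_mean_tendsto:
  assumes q: "q \<longlonglongrightarrow> t" and "0 < t"
  shows "(\<lambda>m. \<integral>\<^sup>+x. ennreal (real (stopped_val X (T m) x)) \<partial>M) \<longlonglongrightarrow> ennreal (\<phi> k / t)"
proof (rule ennreal_tendstoI)
  let ?I = "\<lambda>m. \<integral>\<^sup>+x. ennreal (real (stopped_val X (T m) x)) \<partial>M"
  fix b :: real assume "0 \<le> b" "ennreal b < ennreal (\<phi> k / t)"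
  then have "b * t < \<phi> k"
    using \<open>0 < t\<close> by (simp add: ennreal_less_iff field_simps)
  then obtain a where "t < a" "b * a < \<phi> k"
    using exists_greater_mult_less \<open>0 \<le> b\<close> by blast
  have "eventually (\<lambda>j. t / 2 < q j) sequentially"
    by (rule order_tendstoD(1)[OF q]) (use \<open>0 < t\<close> in simp)
  then have "AE x in M. hit_zero X x \<noteq> \<infinity>"
    using \<open>0 < t\<close> by (intro AE_hit_zero filterlim_scale_at_top[where c="t / 2"]) simp_all
  moreover obtain C where "\<And>j. q j \<le> C"
    using Bseq_bdd_above[OF convergent_imp_Bseq[OF convergentI[OF q]]] by (auto simp: bdd_above_def)
  moreover have "eventually (\<lambda>j. q j < a) sequentially"
    using order_tendstoD(2)[OF q \<open>t < a\<close>] .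
  ultimately show "eventually (\<lambda>m. ennreal b < ?I m) sequentially"
    using \<open>0 \<le> b\<close> \<open>b * a < \<phi> k\<close>
    by (intro eventually_less_stopped_mean)
next
  let ?I = "\<lambda>m. \<integral>\<^sup>+x. ennreal (real (stopped_val X (T m) x)) \<partial>M"
  fix u :: real assume "0 < u" "ennreal (\<phi> k / t) < ennreal u"
  then have "\<phi> k / t < u"
    using \<open>0 < t\<close> scale_nonneg[of k] by (simp add: ennreal_less_iff)
  then have "\<phi> k < t * u"
    using \<open>0 < t\<close> by (simp add: divide_less_eq mult_ac)
  then obtain c where "0 < c" "c < t" "\<phi> k < c * u"
    using exists_less_mult_greater \<open>0 < t\<close> \<open>0 < u\<close> scale_nonneg by blast
  moreover have "eventually (\<lambda>j. c < q j) sequentially"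
    using order_tendstoD(1)[OF q \<open>c < t\<close>] .
  ultimately show "eventually (\<lambda>m. ?I m < ennreal u) sequentially"
    by (intro eventually_stopped_mean_less)
qed

lemma stopped_mean_tendsto_limit:
  assumes "k \<ge> 1" and q: "(\<lambda>n. ennreal (q n)) \<longlonglongrightarrow> t_inf"
  shows "(\<lambda>m. \<integral>\<^sup>+x. ennreal (real (stopped_val X (T m) x)) \<partial>M) \<longlonglongrightarrow>
    (if t_inf = 0 then \<infinity> else if t_inf = \<infinity> then 0 else ennreal (\<phi> k) / t_inf)"
proof (cases t_inf rule: ennreal_cases)
  case (real t)
  then have "q \<longlonglongrightarrow> t"
    using q ratio_prod_pos by (simp add: less_imp_le)
  show ?thesis
  proof (cases "t = 0")
    case True
    then show ?thesis
      using stopped_mean_tendsto_top[OF \<open>k \<ge> 1\<close>] \<open>q \<longlonglongrightarrow> t\<close> real by simp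
  next
    case False
    then have "ennreal (\<phi> k) / t_inf = ennreal (\<phi> k / t)"
      using real scale_nonneg by (simp add: divide_ennreal)
    then show ?thesis
      using stopped_mean_tendsto[OF \<open>q \<longlonglongrightarrow> t\<close>] real False by simp
  qed
next
  case top
  then show ?thesis
    using q stopped_mean_tendsto_0 by (simp add: ennreal_tendsto_top_eq_at_top)
qed

end

end

theorem theorem1:
  fixes M :: "'a measure" and l r :: "nat \<Rightarrow> real" and k :: nat
    and X :: "nat \<Rightarrow> 'a \<Rightarrow> nat" and t_inf :: ennreal
  assumes lr_pos: "\<And>n. n \<ge> 1 \<Longrightarrow> l n > 0 \<and> r n > 0"
    and lr_sum: "\<And>n. n \<ge> 1 \<Longrightarrow> l n + r n = 1"
    and k: "k \<ge> 1"
    and chain: "bd_chain M l r k X"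
    and t_lim: "(\<lambda>n. ennreal (t_seq l r n)) \<longlonglongrightarrow> t_inf"
  shows "\<forall>T :: nat \<Rightarrow> 'a \<Rightarrow> enat.
     ((\<forall>m\<ge>1. nat_stopping_time M X (T m)) \<and>
      (\<forall>m\<ge>1. \<forall>x\<in>space M. T m x \<le> T (Suc m) x) \<and>
      (\<forall>m\<ge>1. (\<integral>\<^sup>+ x. ennreal_of_enat (T m x) \<partial>M) < \<infinity>) \<and>
      (AE x in M. (\<lambda>m. ennreal_of_enat (T m x)) \<longlonglongrightarrow> ennreal_of_enat (hit_zero X x)))
     \<longrightarrow>
     (\<lambda>m. \<integral>\<^sup>+ x. ennreal (real (stopped_val X (T m) x)) \<partial>M) \<longlonglongrightarrow>
       (let S = (\<Sum>j<k. (\<Prod>i=1..j. l i / r i))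
        in if t_inf = 0 then \<infinity> else if t_inf = \<infinity> then 0 else ennreal S / t_inf)"
proof (intro allI impI, elim conjE)
  fix T :: "nat \<Rightarrow> 'a \<Rightarrow> enat"
  assume stopping: "\<forall>m\<ge>1. nat_stopping_time M X (T m)"
    and integrable: "\<forall>m\<ge>1. (\<integral>\<^sup>+ x. ennreal_of_enat (T m x) \<partial>M) < \<infinity>"
    and tendsto: "AE x in M. (\<lambda>m. ennreal_of_enat (T m x)) \<longlonglongrightarrow> ennreal_of_enat (hit_zero X x)"
  interpret birth_death_chain M l r k X
    using lr_pos lr_sum chain by unfold_locales
  text \<open>The hypotheses only concern m \<ge> 1, so we pass to the shifted sequence.\<close>
  have "(\<lambda>m. \<integral>\<^sup>+ x. ennreal (real (stopped_val X (T (Suc m)) x)) \<partial>M) \<longlonglongrightarrow>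
      (if t_inf = 0 then \<infinity> else if t_inf = \<infinity> then 0 else ennreal (\<phi> k) / t_inf)"
    using stopping integrable tendsto k t_lim
    by (intro stopped_mean_tendsto_limit) (auto simp: t_seq_eq_ratio_prod elim: eventually_mono LIMSEQ_Suc)
  moreover have "(\<Sum>j<k. (\<Prod>i=1..j. l i / r i)) = \<phi> k"
    by (simp add: scale_def ratio_prod_def)
  ultimately show "(\<lambda>m. \<integral>\<^sup>+ x. ennreal (real (stopped_val X (T m) x)) \<partial>M) \<longlonglongrightarrow>
       (let S = (\<Sum>j<k. (\<Prod>i=1..j. l i / r i))
        in if t_inf = 0 then \<infinity> else if t_inf = \<infinity> then 0 else ennreal S / t_inf)"
    unfolding Let_def by (auto intro: LIMSEQ_imp_Suc)
qed

end
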